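(* In the setting below, for each $1\le t\le mn$, $$\left|\mathbb{E}\left(w_t\left(z_t-\frac1n\right)\right)\right|\le \frac{4}{mn}\sqrt{6\sum_{i=1}^{mn}\mathbb{E}(z_i)+8m}.$$
   Context: Setting: $m,n$ are positive integers with $n\ge 1200\sqrt m$. A deck of $mn$ cards with $m$ copies of each label $1,\dots,n$ is shuffled uniformly at random. A fixed guessing strategy is used: in round $t=1,\dots,mn$ the Guesser guesses $g_t\in\{1,\dots,n\}$, a function (possibly randomized independently of the deck) of $y_1,\dots,y_{t-1}$, where $y_t\in\{0,1\}$ is the indicator that the $t$-th card has label $g_t$. For a vector $v$, $v_{\le t}:=(v_1,\dots,v_t)$. For $1\le k\le n$, $1\le t\le mn+1$: $a(k,t):=|\{1\le i<t: g_i=k\}|$. Let $Y:=\lfloor \tfrac16\sqrt m\, n\rfloor$. Let $(z_1,\dots,z_{mn})\in\{0,1\}^{mn}$ be a random vector (on an extension of the probability space), with $c(k,t):=|\{1\le i<t: g_i=k,\ z_i=1\}|$, satisfying almost surely: (a) for all $k,t$: $m-\max\{mn-a(k,t)-Y,0\}\le c(k,t)\le m$; (b) for each $t$, conditioned on $g_{\le t},y_{\le t}$, the coordinates of $z_{\le t}$ are mutually independent and independent from $g_{\le mn},y_{\le mn}$; (c) for each $t$, if $a(g_t,t)<mn-Y$ then $\mathbb{E}(z_t\mid g_{\le t},z_{\le t-1})=\frac{m-c(g_t,t)}{mn-a(g_t,t)-Y}$; (d) for each $t$, if $\mathbb{E}(y_t\mid g_{\le t},y_{\le t-1})\le\mathbb{E}(z_t\mid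 g_{\le t},z_{\le t-1})$ then $y_t\le z_t$. (Such a vector exists.) For $1\le t\le mn$, $w_t\in\{0,1\}$ is the indicator of the event $a(g_t,t)\le \frac12 mn$. *)

theory Defs
  imports "HOL-Probability.Probability"
begin

text \<open>All arrangements of a deck with m copies of each label 1..n (positions 1..mn
  correspond to list indices 0..mn-1).\<close>
definition decks :: "nat \<Rightarrow> nat \<Rightarrow> nat list set" where
  "decks m n = {xs. length xs = m * n \<and> (\<forall>k\<in>{1..n}. count (mset xs) k = m)}"

definition acount :: "(nat \<Rightarrow> nat) \<Rightarrow> nat \<Rightarrow> nat \<Rightarrow> nat" where
  "acount g k t = card {i. 1 \<le> i \<and> i < t \<and> g i = k}"

definition ccount :: "(nat \<Rightarrow> nat) \<Rightarrow> (nat \<Rightarrow> bool) \<Rightarrow> nat \<Rightarrow> nat \<Rightarrow> nat" where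
  "ccount g z k t = card {i. 1 \<le> i \<and> i < t \<and> g i = k \<and> z i}"

definition Ybd :: "nat \<Rightarrow> nat \<Rightarrow> nat" where
  "Ybd m n = nat \<lfloor>sqrt (real m) * real n / 6\<rfloor>"

definition hist_algebra :: "'a measure \<Rightarrow> (nat \<Rightarrow> 'a \<Rightarrow> nat) \<Rightarrow> (nat \<Rightarrow> 'a \<Rightarrow> bool) \<Rightarrow> nat \<Rightarrow> 'a measure" where
  "hist_algebra M g b t = vimage_algebra (space M)
     (\<lambda>\<omega>. (map (\<lambda>i. g i \<omega>) [1..<t+1], map (\<lambda>i. b i \<omega>) [1..<t])) (count_space UNIV)"

definition gy_cell :: "'a measure \<Rightarrow> (nat \<Rightarrow> 'a \<Rightarrow> nat) \<Rightarrow> (nat \<Rightarrow> 'a \<Rightarrow> bool) \<Rightarrow> nat \<Rightarrow> nat list \<Rightarrow> bool list \<Rightarrow> 'a set" where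
  "gy_cell M g y t gs ys = {\<omega> \<in> space M. map (\<lambda>i. g i \<omega>) [1..<t+1] = gs \<and> map (\<lambda>i. y i \<omega>) [1..<t+1] = ys}"

end

theory Submission
  imports Defs
begin

text \<open>Write \<open>T = mn\<close>. By (c), as long as a label \<open>k\<close> has been guessed at most \<open>T/2\<close> times
  before round \<open>s\<close>, the conditional probability of \<open>z\<^sub>s = 1\<close> given \<open>g\<^sub>s = k\<close> is
  \<open>q\<^sub>k(s) = (m - c(k,s)) / (T - a(k,s) - Y)\<close>. A direct computation shows that then
  \<open>q\<^sub>k(s) = m/(T - Y) - V\<^sub>k(s)\<close>, where \<open>V\<^sub>k\<close> is a martingale whose increment in round \<open>s\<close>
  has second moment at most \<open>16/T\<^sup>2 \<cdot> E(z\<^sub>s)\<close>. Orthogonality of martingale increments gives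
  \<open>E \<Sum>\<^sub>k V\<^sub>k(t)\<^sup>2 \<le> 16/T\<^sup>2 \<cdot> \<Sum>\<^sub>i E(z\<^sub>i)\<close>. Finally
  \<open>E(w\<^sub>t(z\<^sub>t - 1/n)) = (m/(T - Y) - 1/n) E(w\<^sub>t) - E(w\<^sub>t V(t))\<close> with \<open>V(t) = V\<^sub>k(t)\<close> for
  \<open>k = g\<^sub>t\<close>; the first term is at most \<open>\<surd>m/T\<close> because \<open>Y \<le> \<surd>m n/6\<close>, and the second is
  bounded by Cauchy-Schwarz.\<close>

lemma measurable_map_count_space:
  fixes f :: "nat \<Rightarrow> 'a \<Rightarrow> 'b::countable"
  assumes "\<And>i. i \<in> set xs \<Longrightarrow> f i \<in> measurable M (count_space UNIV)"
  shows "(\<lambda>\<omega>. map (\<lambda>i. f i \<omega>) xs) \<in> measurable M (count_space UNIV)"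
  using assms
proof (induction xs)
  case Nil
  then show ?case by simp
next
  case (Cons x xs)
  have IH: "(\<lambda>\<omega>. map (\<lambda>i. f i \<omega>) xs) \<in> measurable M (count_space UNIV)"
    using Cons by auto
  have "(\<lambda>\<omega>. (\<lambda>v \<omega>. v # map (\<lambda>i. f i \<omega>) xs) (f x \<omega>) \<omega>) \<in> measurable M (count_space UNIV)"
  proof (rule measurable_compose_countable'[where f="\<lambda>v \<omega>. v # map (\<lambda>i. f i \<omega>) xs" and I=UNIV])
    fix v :: 'b
    show "(\<lambda>\<omega>. v # map (\<lambda>i. f i \<omega>) xs) \<in> measurable M (count_space UNIV)"
      using measurable_compose[OF IH, where g="\<lambda>w. v # w" and L="count_space UNIV"] by simp
  qed (use Cons in auto)
  then show ?case by simp
qed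

lemma measurable_pair_count_space:
  fixes f :: "'a \<Rightarrow> 'b::countable" and h :: "'a \<Rightarrow> 'c::countable"
  assumes "f \<in> measurable M (count_space UNIV)" "h \<in> measurable M (count_space UNIV)"
  shows "(\<lambda>\<omega>. (f \<omega>, h \<omega>)) \<in> measurable M (count_space UNIV)"
proof -
  have "(\<lambda>\<omega>. (\<lambda>v \<omega>. (v, h \<omega>)) (f \<omega>) \<omega>) \<in> measurable M (count_space UNIV)"
  proof (rule measurable_compose_countable'[where f="\<lambda>v \<omega>. (v, h \<omega>)" and I=UNIV])
    fix v :: 'b
    show "(\<lambda>\<omega>. (v, h \<omega>)) \<in> measurable M (count_space UNIV)"
      using measurable_compose[OF assms(2), where g="\<lambda>w. (v, w)" and L="count_space UNIV"] by simp
  qed (use assms in auto)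
  then show ?thesis by simp
qed

lemma guesses_measurable:
  fixes G :: "nat \<Rightarrow> 'r \<Rightarrow> bool list \<Rightarrow> 'b::countable"
  assumes rho_meas: "\<rho> \<in> measurable M R"
    and deck_meas: "deck \<in> measurable M (count_space UNIV)"
    and G_meas: "\<And>i bs. (\<lambda>r. G i r bs) \<in> measurable R (count_space UNIV)"
    and play: "\<And>\<omega> i. \<omega> \<in> space M \<Longrightarrow> i \<in> {1..N} \<Longrightarrow>
                 g i \<omega> = G i (\<rho> \<omega>) (map (\<lambda>j. y j \<omega>) [1..<i]) \<and> y i \<omega> = (deck \<omega> ! (i - 1) = g i \<omega>)"
  shows "i \<in> {1..N} \<Longrightarrow> g i \<in> measurable M (count_space UNIV) \<and> y i \<in> measurable M (count_space UNIV)"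
proof (induction i rule: less_induct)
  case (less i)
  have ys: "(\<lambda>\<omega>. map (\<lambda>j. y j \<omega>) [1..<i]) \<in> measurable M (count_space UNIV)"
    by (rule measurable_map_count_space) (use less in auto)
  have "(\<lambda>\<omega>. G i (\<rho> \<omega>) (map (\<lambda>j. y j \<omega>) [1..<i])) \<in> measurable M (count_space UNIV)"
  proof (rule measurable_compose_countable'[where f="\<lambda>bs \<omega>. G i (\<rho> \<omega>) bs" and I=UNIV])
    fix bs
    show "(\<lambda>\<omega>. G i (\<rho> \<omega>) bs) \<in> measurable M (count_space UNIV)"
      using measurable_compose[OF rho_meas G_meas] .
  qed (use ys in auto)
  then have g_meas: "g i \<in> measurable M (count_space UNIV)"
    using play less.prems by (subst measurable_cong) auto
  have "(\<lambda>\<omega>. deck \<omega> ! (i - 1) = g i \<omega>) \<in> measurable M (count_space UNIV)"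
  proof (rule measurable_compose_countable'[where f="\<lambda>k \<omega>. deck \<omega> ! (i - 1) = k" and I=UNIV])
    fix k
    show "(\<lambda>\<omega>. deck \<omega> ! (i - 1) = k) \<in> measurable M (count_space UNIV)"
      using measurable_compose[OF deck_meas, where g="\<lambda>xs. xs ! (i - 1) = k" and L="count_space UNIV"]
      by simp
  qed (use g_meas in auto)
  then have "y i \<in> measurable M (count_space UNIV)"
    using play less.prems by (subst measurable_cong) auto
  with g_meas show ?case by simp
qed

lemma acount_cong:
  "(\<And>i. 1 \<le> i \<Longrightarrow> i < s \<Longrightarrow> g i = g' i) \<Longrightarrow> acount g k s = acount g' k s"
  unfolding acount_def by (metis (lifting))

lemma ccount_cong:
  "(\<And>i. 1 \<le> i \<Longrightarrow> i < s \<Longrightarrow> g i = g' i) \<Longrightarrow> (\<And>i. 1 \<le> i \<Longrightarrow> i < s \<Longrightarrow> z i = z' i) \<Longrightarrow>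
    ccount g z k s = ccount g' z' k s"
  unfolding ccount_def by (metis (lifting))

lemma acount_Suc:
  assumes "1 \<le> s"
  shows "acount g k (Suc s) = acount g k s + of_bool (g s = k)"
proof -
  have "{i. 1 \<le> i \<and> i < Suc s \<and> g i = k} = {i. 1 \<le> i \<and> i < s \<and> g i = k} \<union> (if g s = k then {s} else {})"
    using assms by (auto simp: less_Suc_eq)
  then show ?thesis unfolding acount_def by auto
qed

lemma ccount_Suc:
  assumes "1 \<le> s"
  shows "ccount g z k (Suc s) = ccount g z k s + of_bool (g s = k \<and> z s)"
proof -
  have "{i. 1 \<le> i \<and> i < Suc s \<and> g i = k \<and> z i}
      = {i. 1 \<le> i \<and> i < s \<and> g i = k \<and> z i} \<union> (if g s = k \<and> z s then {s} else {})"
    using assms by (auto simp: less_Suc_eq)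
  then show ?thesis unfolding ccount_def by auto
qed

lemma acount_1: "acount g k (Suc 0) = 0"
  unfolding acount_def by simp

lemma ccount_1: "ccount g z k (Suc 0) = 0"
  unfolding ccount_def by simp

lemma ccount_le: "ccount g z k s \<le> s"
proof -
  have "ccount g z k s \<le> card {1..<s}"
    unfolding ccount_def by (rule card_mono) auto
  then show ?thesis by simp
qed

lemma power2_mult_diff_idem:
  fixes p x y :: "'a::comm_ring_1"
  assumes "x * x = x"
  shows "(p * (x - y))\<^sup>2 = p\<^sup>2 * x - 2 * (p\<^sup>2 * y * x) + p\<^sup>2 * y * y"
proof -
  have "(p * (x - y))\<^sup>2 = p\<^sup>2 * (x * x) - 2 * (p\<^sup>2 * y * x) + p\<^sup>2 * y * y"
    by (simp add: power2_eq_square algebra_simps)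
  then show ?thesis using assms by simp
qed

lemma (in prob_space) integral_le_sqrt_integral_square:
  fixes X :: "'a \<Rightarrow> real"
  assumes "integrable M X" "integrable M (\<lambda>x. (X x)\<^sup>2)"
  shows "(\<integral>x. X x \<partial>M) \<le> sqrt (\<integral>x. (X x)\<^sup>2 \<partial>M)"
proof -
  have "0 \<le> (\<integral>x. (X x)\<^sup>2 \<partial>M) - (\<integral>x. X x \<partial>M)\<^sup>2"
    using variance_positive[of X] variance_eq[OF assms] by simp
  then show ?thesis by (intro real_le_rsqrt) simp
qed

lemma sqrt_add_four_sqrt_le:
  fixes u v :: real
  assumes "0 \<le> u" "0 \<le> v"
  shows "sqrt u + 4 * sqrt v \<le> 4 * sqrt (6 * v + 8 * u)"
proof -
  define a b where "a = sqrt u" and "b = sqrt v"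
  have "2 * (a * b) \<le> a * a + b * b"
    using sum_squares_bound[of a b] by (simp add: power2_eq_square)
  moreover have "0 \<le> a * a" "0 \<le> b * b" by simp_all
  moreover have "a * a = u" "b * b = v" unfolding a_def b_def using assms by simp_all
  ultimately have "(a + 4 * b)\<^sup>2 \<le> 16 * (6 * v + 8 * u)"
    by (simp add: power2_eq_square algebra_simps)
  then have "a + 4 * b \<le> sqrt (16 * (6 * v + 8 * u))" by (rule real_le_rsqrt)
  also have "\<dots> = sqrt 16 * sqrt (6 * v + 8 * u)" by (rule real_sqrt_mult)
  also have "sqrt 16 = (4::real)" by (simp add: real_sqrt_eq_iff)
  finally show ?thesis unfolding a_def b_def .
qed

locale coupled_guesses = prob_space M for M :: "'a measure" +
  fixes m n :: nat and g :: "nat \<Rightarrow> 'a \<Rightarrow> nat" and z :: "nat \<Rightarrow> 'a \<Rightarrow> bool"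
  assumes m_pos: "m \<ge> 1"
    and n_big: "real n \<ge> 1200 * sqrt (real m)"
    and g_measurable: "\<And>i. i \<in> {1..m*n} \<Longrightarrow> g i \<in> measurable M (count_space UNIV)"
    and z_measurable: "\<And>i. i \<in> {1..m*n} \<Longrightarrow> z i \<in> measurable M (count_space UNIV)"
    and g_range: "\<And>i \<omega>. i \<in> {1..m*n} \<Longrightarrow> \<omega> \<in> space M \<Longrightarrow> g i \<omega> \<in> {1..n}"
    and z_cond_prob: "\<forall>s\<in>{1..m*n}. AE \<omega> in M.
        int (acount (\<lambda>i. g i \<omega>) (g s \<omega>) s) < int (m*n) - int (Ybd m n) \<longrightarrow>
        real_cond_exp M (hist_algebra M g z s) (\<lambda>\<omega>. of_bool (z s \<omega>)) \<omega>
          = (real m - real (ccount (\<lambda>i. g i \<omega>) (\<lambda>i. z i \<omega>) (g s \<omega>) s))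
            / (real (m*n) - real (acount (\<lambda>i. g i \<omega>) (g s \<omega>) s) - real (Ybd m n))"
begin

definition "T = real (m*n)"
definition "Y = real (Ybd m n)"
definition "a k s \<omega> = real (acount (\<lambda>i. g i \<omega>) k s)"
definition "c k s \<omega> = real (ccount (\<lambda>i. g i \<omega>) (\<lambda>i. z i \<omega>) k s)"
definition "w s \<omega> = (of_bool (a (g s \<omega>) s \<omega> \<le> T / 2) :: real)"
definition "q k s \<omega> = (real m - c k s \<omega>) / (T - a k s \<omega> - Y)"
definition "q_init = real m / (T - Y)"
definition "den k s \<omega> = T - a k s \<omega> - Y - 1"

text \<open>The increments are chosen so that \<open>q k (s + 1) = q k s - incr s\<close> whenever \<open>g s = k\<close>
  (lemma \<open>q_eq_q_init_minus_mart\<close>); by (c) they have conditional mean zero.\<close>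
definition "incr s \<omega> = w s \<omega> * (of_bool (z s \<omega>) - q (g s \<omega>) s \<omega>) / den (g s \<omega>) s \<omega>"
definition "mart k s \<omega> = (\<Sum>i\<in>{1..<s}. of_bool (g i \<omega> = k) * incr i \<omega>)"
definition "energy s \<omega> = (\<Sum>k\<in>{1..n}. (mart k s \<omega>)\<^sup>2)"
definition "hist j = hist_algebra M g z j"

lemma T_ge: "T \<ge> 1200" and m_le_T: "real m \<le> T"
proof -
  have "1 \<le> sqrt (real m)" using m_pos by simp
  then have n: "real n \<ge> 1200" using n_big by linarith
  have "real m * 1 \<le> real m * real n" using n by (intro mult_left_mono) auto
  then show "real m \<le> T" unfolding T_def by simp
  have "1 * real n \<le> real m * real n" using m_pos by (intro mult_right_mono) auto
  then show "T \<ge> 1200" using n unfolding T_def of_nat_mult by linarith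
qed

lemma T_pos: "T > 0"
  using T_ge by simp

lemma Y_le: "Y \<le> sqrt (real m) * real n / 6"
proof -
  have "0 \<le> sqrt (real m) * real n / 6" by simp
  then show ?thesis unfolding Y_def Ybd_def by linarith
qed

lemma Y_le_T: "Y \<le> T / 6"
proof -
  have "sqrt (real m) * 1 \<le> sqrt (real m) * sqrt (real m)"
    using m_pos by (intro mult_left_mono) auto
  then have "sqrt (real m) \<le> real m" by simp
  then have "sqrt (real m) * real n \<le> real m * real n" by (simp add: mult_right_mono)
  then show ?thesis using Y_le unfolding T_def by simp
qed

lemma den_ge: "a k s \<omega> \<le> T / 2 \<Longrightarrow> den k s \<omega> \<ge> T / 4"
  unfolding den_def using Y_le_T T_ge by linarith

lemma q_abs_le:
  assumes "a k s \<omega> \<le> T / 2" "s \<le> m*n"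
  shows "\<bar>q k s \<omega>\<bar> \<le> 4"
proof -
  have "ccount (\<lambda>i. g i \<omega>) (\<lambda>i. z i \<omega>) k s \<le> m*n"
    using ccount_le assms(2) by (rule le_trans)
  then have "c k s \<omega> \<le> T" unfolding c_def T_def by (simp only: of_nat_le_iff)
  moreover have "0 \<le> c k s \<omega>" unfolding c_def by simp
  ultimately have num: "\<bar>real m - c k s \<omega>\<bar> \<le> T" using m_le_T by linarith
  have den: "T / 4 \<le> T - a k s \<omega> - Y" using den_ge[OF assms(1)] unfolding den_def by simp
  then have "0 < T - a k s \<omega> - Y" using T_pos by linarith
  then have "\<bar>q k s \<omega>\<bar> = \<bar>real m - c k s \<omega>\<bar> / (T - a k s \<omega> - Y)"
    unfolding q_def abs_divide by simp
  also have "\<dots> \<le> T / (T / 4)"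
    by (rule frac_le[OF _ num _ den]) (use T_pos in auto)
  also have "\<dots> = 4" using T_pos by simp
  finally show ?thesis .
qed

lemma incr_abs_le:
  assumes s: "s \<le> m*n"
  shows "\<bar>incr s \<omega>\<bar> \<le> 20 / T"
proof (cases "a (g s \<omega>) s \<omega> \<le> T / 2")
  case True
  have d: "T / 4 \<le> den (g s \<omega>) s \<omega>" by (rule den_ge[OF True])
  have "\<bar>of_bool (z s \<omega>) - q (g s \<omega>) s \<omega>\<bar> \<le> \<bar>of_bool (z s \<omega>)\<bar> + \<bar>q (g s \<omega>) s \<omega>\<bar>"
    by (rule abs_triangle_ineq4)
  also have "\<dots> \<le> 5" using q_abs_le[OF True s] by simp
  finally have "\<bar>of_bool (z s \<omega>) - q (g s \<omega>) s \<omega>\<bar> / den (g s \<omega>) s \<omega> \<le> 5 / (T / 4)"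
    using d T_pos by (intro frac_le) auto
  moreover have "\<bar>incr s \<omega>\<bar> = \<bar>of_bool (z s \<omega>) - q (g s \<omega>) s \<omega>\<bar> / den (g s \<omega>) s \<omega>"
    using d T_pos True unfolding incr_def w_def abs_divide by simp
  ultimately show ?thesis by simp
next
  case False
  then show ?thesis unfolding incr_def w_def using T_pos by simp
qed

lemma mart_abs_le: "s \<le> m*n + 1 \<Longrightarrow> \<bar>mart k s \<omega>\<bar> \<le> 20"
proof -
  assume s: "s \<le> m*n + 1"
  have "\<bar>mart k s \<omega>\<bar> \<le> (\<Sum>i\<in>{1..<s}. \<bar>of_bool (g i \<omega> = k) * incr i \<omega>\<bar>)"
    unfolding mart_def by (rule sum_abs)
  also have "\<dots> \<le> (\<Sum>i\<in>{1..<s}. 20 / T)"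
  proof (rule sum_mono)
    fix i assume "i \<in> {1..<s}"
    then have "\<bar>incr i \<omega>\<bar> \<le> 20 / T" using s by (intro incr_abs_le) auto
    then show "\<bar>of_bool (g i \<omega> = k) * incr i \<omega>\<bar> \<le> 20 / T"
      using T_pos by (cases "g i \<omega> = k") auto
  qed
  also have "\<dots> = real (s - 1) * (20 / T)" by simp
  also have "\<dots> \<le> T * (20 / T)"
  proof (rule mult_right_mono)
    have "s - 1 \<le> m*n" using s by simp
    then show "real (s - 1) \<le> T" unfolding T_def by (simp only: of_nat_le_iff)
  qed (use T_pos in simp)
  finally show ?thesis using T_pos by simp
qed

lemma energy_bounded: "s \<le> m*n + 1 \<Longrightarrow> \<bar>energy s \<omega>\<bar> \<le> 400 * real n"
proof -
  assume s: "s \<le> m*n + 1"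
  have "\<bar>energy s \<omega>\<bar> = (\<Sum>k\<in>{1..n}. (mart k s \<omega>)\<^sup>2)"
    unfolding energy_def by (simp add: sum_nonneg)
  also have "\<dots> \<le> (\<Sum>k\<in>{1..n}. 20\<^sup>2)"
  proof (rule sum_mono)
    fix k
    have "\<bar>mart k s \<omega>\<bar> \<le> \<bar>20\<bar>" using mart_abs_le[OF s] by simp
    then show "(mart k s \<omega>)\<^sup>2 \<le> 20\<^sup>2" by (simp only: abs_le_square_iff)
  qed
  finally show ?thesis by simp
qed

definition same_history :: "nat \<Rightarrow> 'a \<Rightarrow> 'a \<Rightarrow> bool" where
  "same_history j \<omega> \<omega>' \<longleftrightarrow> (\<forall>i\<in>{1..j}. g i \<omega> = g i \<omega>') \<and> (\<forall>i\<in>{1..<j}. z i \<omega> = z i \<omega>')"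

definition determined_by_history :: "nat \<Rightarrow> ('a \<Rightarrow> real) \<Rightarrow> bool" where
  "determined_by_history j f \<longleftrightarrow>
     (\<forall>\<omega>\<in>space M. \<forall>\<omega>'\<in>space M. same_history j \<omega> \<omega>' \<longrightarrow> f \<omega> = f \<omega>')"

lemma determined_by_historyI:
  "(\<And>\<omega> \<omega>'. same_history j \<omega> \<omega>' \<Longrightarrow> f \<omega> = f \<omega>') \<Longrightarrow> determined_by_history j f"
  unfolding determined_by_history_def by blast

lemma same_history_mono: "same_history j \<omega> \<omega>' \<Longrightarrow> s \<le> j \<Longrightarrow> same_history s \<omega> \<omega>'"
  unfolding same_history_def by auto

lemma same_history_g: "same_history s \<omega> \<omega>' \<Longrightarrow> 1 \<le> s \<Longrightarrow> g s \<omega> = g s \<omega>'"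
  unfolding same_history_def by auto

lemma same_history_a: "same_history s \<omega> \<omega>' \<Longrightarrow> a k s \<omega> = a k s \<omega>'"
  unfolding a_def same_history_def by (subst acount_cong[where g'="\<lambda>i. g i \<omega>'"]) auto

lemma same_history_c: "same_history s \<omega> \<omega>' \<Longrightarrow> c k s \<omega> = c k s \<omega>'"
  unfolding c_def same_history_def
  by (subst ccount_cong[where g'="\<lambda>i. g i \<omega>'" and z'="\<lambda>i. z i \<omega>'"]) auto

lemma same_history_q: "same_history s \<omega> \<omega>' \<Longrightarrow> q k s \<omega> = q k s \<omega>'"
  unfolding q_def using same_history_a same_history_c by simp

lemma same_history_den: "same_history s \<omega> \<omega>' \<Longrightarrow> den k s \<omega> = den k s \<omega>'"
  unfolding den_def using same_history_a by simp

lemma same_history_w: "same_history s \<omega> \<omega>' \<Longrightarrow> 1 \<le> s \<Longrightarrow> w s \<omega> = w s \<omega>'"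
  unfolding w_def using same_history_a same_history_g by simp

lemma same_history_incr:
  assumes "same_history (Suc s) \<omega> \<omega>'" "1 \<le> s"
  shows "incr s \<omega> = incr s \<omega>'"
proof -
  have h: "same_history s \<omega> \<omega>'" using same_history_mono[OF assms(1)] by simp
  have "z s \<omega> = z s \<omega>'" using assms unfolding same_history_def by auto
  then show ?thesis unfolding incr_def
    using same_history_w[OF h] same_history_g[OF h] same_history_q[OF h] same_history_den[OF h] assms(2)
    by simp
qed

lemma same_history_mart: "same_history s \<omega> \<omega>' \<Longrightarrow> mart k s \<omega> = mart k s \<omega>'"
  unfolding mart_def
proof (rule sum.cong)
  fix i assume "same_history s \<omega> \<omega>'" "i \<in> {1..<s}"
  then have "same_history (Suc i) \<omega> \<omega>'" "1 \<le> i" by (auto intro: same_history_mono)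
  then show "of_bool (g i \<omega> = k) * incr i \<omega> = of_bool (g i \<omega>' = k) * incr i \<omega>'"
    using same_history_incr same_history_g[OF same_history_mono] by fastforce
qed simp

lemma same_history_energy: "same_history s \<omega> \<omega>' \<Longrightarrow> energy s \<omega> = energy s \<omega>'"
  unfolding energy_def using same_history_mart by simp

lemma measurable_history:
  "(\<lambda>\<omega>. (map (\<lambda>i. g i \<omega>) [1..<j+1], map (\<lambda>i. z i \<omega>) [1..<j])) \<in> measurable (hist j) (count_space UNIV)"
  unfolding hist_def hist_algebra_def by (rule measurable_vimage_algebra1) simp

lemma determined_by_history_measurable_hist:
  assumes "determined_by_history j f"
  shows "f \<in> borel_measurable (hist j)"
proof -
  define L where "L = (\<lambda>\<omega>. (map (\<lambda>i. g i \<omega>) [1..<j+1], map (\<lambda>i. z i \<omega>) [1..<j]))"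
  define \<phi> where "\<phi> x = f (SOME \<omega>. \<omega> \<in> space M \<and> L \<omega> = x)" for x
  have "f \<omega> = \<phi> (L \<omega>)" if "\<omega> \<in> space M" for \<omega>
  proof -
    define \<omega>' where "\<omega>' = (SOME \<omega>'. \<omega>' \<in> space M \<and> L \<omega>' = L \<omega>)"
    have "\<omega>' \<in> space M \<and> L \<omega>' = L \<omega>" unfolding \<omega>'_def by (rule someI_ex) (use that in blast)
    then have "\<omega>' \<in> space M" "same_history j \<omega> \<omega>'"
      unfolding L_def same_history_def by (auto simp: map_eq_conv)
    then show ?thesis using assms that unfolding determined_by_history_def \<phi>_def \<omega>'_def by simp
  qed
  moreover have "(\<lambda>\<omega>. \<phi> (L \<omega>)) \<in> borel_measurable (hist j)"
    using measurable_history unfolding L_def by (rule measurable_compose) simp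
  ultimately show ?thesis
    by (subst measurable_cong[where g="\<lambda>\<omega>. \<phi> (L \<omega>)"]) (auto simp: hist_def hist_algebra_def)
qed

lemma subalgebra_hist:
  assumes "j \<le> m*n"
  shows "subalgebra M (hist j)"
proof -
  define L where "L = (\<lambda>\<omega>. (map (\<lambda>i. g i \<omega>) [1..<j+1], map (\<lambda>i. z i \<omega>) [1..<j]))"
  have "L \<in> measurable M (count_space UNIV)"
    unfolding L_def using assms
    by (intro measurable_pair_count_space measurable_map_count_space g_measurable z_measurable) auto
  moreover have "sets (hist j) = {L -` X \<inter> space M | X. X \<in> sets (count_space UNIV)}"
    unfolding hist_def hist_algebra_def L_def by (rule sets_vimage_algebra2) simp
  ultimately have "sets (hist j) \<subseteq> sets M" using measurable_sets by auto
  moreover have "space (hist j) = space M" unfolding hist_def hist_algebra_def by simp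
  ultimately show ?thesis unfolding subalgebra_def by blast
qed

lemma sigma_finite_subalgebra_hist: "j \<le> m*n \<Longrightarrow> sigma_finite_subalgebra M (hist j)"
  by (intro finite_measure_subalgebra_is_sigma_finite)
    (simp add: finite_measure_subalgebra_def finite_measure_subalgebra_axioms_def
      subalgebra_hist finite_measure_axioms)

lemma determined_by_history_measurable:
  "j \<le> m*n \<Longrightarrow> determined_by_history j f \<Longrightarrow> f \<in> borel_measurable M"
  using measurable_from_subalg[OF subalgebra_hist determined_by_history_measurable_hist] .

lemma energy_measurable: "s \<le> m*n \<Longrightarrow> energy s \<in> borel_measurable M"
  by (rule determined_by_history_measurable) (auto intro: determined_by_historyI same_history_energy)

lemma bounded_integrable:
  fixes f :: "'a \<Rightarrow> real"
  shows "f \<in> borel_measurable M \<Longrightarrow> (\<And>\<omega>. \<omega> \<in> space M \<Longrightarrow> \<bar>f \<omega>\<bar> \<le> B) \<Longrightarrow> integrable M f"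
  by (rule integrable_const_bound[where B=B]) auto

lemma z_measurable_real:
  "i \<in> {1..m*n} \<Longrightarrow> (\<lambda>\<omega>. of_bool (z i \<omega>) :: real) \<in> borel_measurable M"
  using measurable_compose[OF z_measurable, where g="\<lambda>b. of_bool b :: real" and L=borel] by simp

lemma integrable_mult_z:
  fixes f :: "'a \<Rightarrow> real"
  assumes "j \<in> {1..m*n}" "f \<in> borel_measurable M" "\<And>\<omega>. \<bar>f \<omega>\<bar> \<le> B"
  shows "integrable M (\<lambda>\<omega>. f \<omega> * of_bool (z j \<omega>))"
proof (rule bounded_integrable[where B=B])
  show "(\<lambda>\<omega>. f \<omega> * of_bool (z j \<omega>)) \<in> borel_measurable M"
    using assms(2) z_measurable_real[OF assms(1)] by measurable
  fix \<omega>
  show "\<bar>f \<omega> * of_bool (z j \<omega>)\<bar> \<le> B"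
    using assms(3)[of \<omega>] abs_ge_zero[of "f \<omega>"] by (cases "z j \<omega>") auto
qed

lemma w_nonneg: "0 \<le> w s \<omega>" and w_le_1: "w s \<omega> \<le> 1"
  unfolding w_def by simp_all

lemma w_eq_1: "w s \<omega> \<noteq> 0 \<Longrightarrow> a (g s \<omega>) s \<omega> \<le> T / 2"
  unfolding w_def by (simp split: if_splits)

lemma w_div_den_nonneg: "0 \<le> w s \<omega> / den (g s \<omega>) s \<omega>"
  and w_div_den_le: "w s \<omega> / den (g s \<omega>) s \<omega> \<le> 4 / T"
proof -
  have "0 \<le> w s \<omega> / den (g s \<omega>) s \<omega> \<and> w s \<omega> / den (g s \<omega>) s \<omega> \<le> 4 / T"
  proof (cases "a (g s \<omega>) s \<omega> \<le> T / 2")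
    case True
    then have d: "T / 4 \<le> den (g s \<omega>) s \<omega>" by (rule den_ge)
    then have "1 / den (g s \<omega>) s \<omega> \<le> 1 / (T / 4)" using T_pos by (intro frac_le) auto
    moreover have "0 < den (g s \<omega>) s \<omega>" using d T_pos by linarith
    ultimately show ?thesis using True unfolding w_def by simp
  qed (use T_pos in \<open>simp add: w_def\<close>)
  then show "0 \<le> w s \<omega> / den (g s \<omega>) s \<omega>" "w s \<omega> / den (g s \<omega>) s \<omega> \<le> 4 / T" by simp_all
qed

lemma q_guess_measurable:
  assumes "j \<in> {1..m*n}"
  shows "(\<lambda>\<omega>. q (g j \<omega>) j \<omega>) \<in> borel_measurable M"
proof (rule determined_by_history_measurable[of j])
  show "determined_by_history j (\<lambda>\<omega>. q (g j \<omega>) j \<omega>)"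
    using same_history_q same_history_g assms by (intro determined_by_historyI) simp
qed (use assms in simp)

lemma w_div_den_sq_le: "(w s \<omega> / den (g s \<omega>) s \<omega>)\<^sup>2 \<le> 16 / T\<^sup>2"
proof -
  have "(w s \<omega> / den (g s \<omega>) s \<omega>)\<^sup>2 \<le> (4 / T)\<^sup>2"
    by (rule power_mono[OF w_div_den_le w_div_den_nonneg])
  then show ?thesis by (simp add: power_divide)
qed

lemma incr_eq_w_div_den_mult:
  "incr s \<omega> = w s \<omega> / den (g s \<omega>) s \<omega> * (of_bool (z s \<omega>) - q (g s \<omega>) s \<omega>)"
  unfolding incr_def by simp

text \<open>The only place where hypothesis (c) enters: where \<open>w\<^sub>j = 1\<close> the label \<open>g\<^sub>j\<close> has been guessed
  fewer than \<open>T - Y\<close> times.\<close>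
lemma cond_exp_z_eq_q:
  assumes j: "j \<in> {1..m*n}"
  shows "AE \<omega> in M. w j \<omega> \<noteq> 0 \<longrightarrow>
           real_cond_exp M (hist j) (\<lambda>\<omega>. of_bool (z j \<omega>)) \<omega> = q (g j \<omega>) j \<omega>"
  using bspec[OF z_cond_prob j]
proof eventually_elim
  case (elim \<omega>)
  show ?case
  proof
    assume "w j \<omega> \<noteq> 0"
    then have "a (g j \<omega>) j \<omega> < T - Y" using w_eq_1 Y_le_T T_pos by fastforce
    then have "int (acount (\<lambda>i. g i \<omega>) (g j \<omega>) j) < int (m*n) - int (Ybd m n)"
      unfolding a_def T_def Y_def by linarith
    then show "real_cond_exp M (hist j) (\<lambda>\<omega>. of_bool (z j \<omega>)) \<omega> = q (g j \<omega>) j \<omega>"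
      using elim unfolding q_def a_def c_def T_def Y_def hist_def by simp
  qed
qed

lemma integral_mult_z_eq_mult_q:
  fixes B :: real
  assumes j: "j \<in> {1..m*n}" and f: "determined_by_history j f"
    and f_bound: "\<And>\<omega>. \<bar>f \<omega>\<bar> \<le> B" and f_support: "\<And>\<omega>. f \<omega> \<noteq> 0 \<Longrightarrow> w j \<omega> \<noteq> 0"
  shows "integrable M (\<lambda>\<omega>. f \<omega> * q (g j \<omega>) j \<omega>)"
    and "(\<integral>\<omega>. f \<omega> * of_bool (z j \<omega>) \<partial>M) = (\<integral>\<omega>. f \<omega> * q (g j \<omega>) j \<omega> \<partial>M)"
proof -
  have j_le: "j \<le> m*n" using j by auto
  interpret sigma_finite_subalgebra M "hist j" by (rule sigma_finite_subalgebra_hist[OF j_le])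
  have f_hist: "f \<in> borel_measurable (hist j)" using f by (rule determined_by_history_measurable_hist)
  have f_meas: "f \<in> borel_measurable M" using measurable_from_subalg[OF subalg f_hist] .
  have fz_int: "integrable M (\<lambda>\<omega>. f \<omega> * of_bool (z j \<omega>))"
    by (rule integrable_mult_z[OF j f_meas f_bound])
  let ?ce = "real_cond_exp M (hist j) (\<lambda>\<omega>. of_bool (z j \<omega>))"
  from real_cond_exp_intg[OF fz_int f_hist z_measurable_real[OF j]]
  have ce_int: "integrable M (\<lambda>\<omega>. f \<omega> * ?ce \<omega>)"
    and ce_eq: "(\<integral>\<omega>. f \<omega> * ?ce \<omega> \<partial>M) = (\<integral>\<omega>. f \<omega> * of_bool (z j \<omega>) \<partial>M)" by auto
  have ae: "AE \<omega> in M. f \<omega> * ?ce \<omega> = f \<omega> * q (g j \<omega>) j \<omega>"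
    using cond_exp_z_eq_q[OF j] by eventually_elim (metis f_support mult_zero_left)
  have ce_meas: "(\<lambda>\<omega>. f \<omega> * ?ce \<omega>) \<in> borel_measurable M"
    using f_meas borel_measurable_cond_exp2 by measurable
  have fq_meas: "(\<lambda>\<omega>. f \<omega> * q (g j \<omega>) j \<omega>) \<in> borel_measurable M"
    using f_meas q_guess_measurable[OF j] by measurable
  show "integrable M (\<lambda>\<omega>. f \<omega> * q (g j \<omega>) j \<omega>)"
    using integrable_cong_AE[OF ce_meas fq_meas ae] ce_int by simp
  show "(\<integral>\<omega>. f \<omega> * of_bool (z j \<omega>) \<partial>M) = (\<integral>\<omega>. f \<omega> * q (g j \<omega>) j \<omega> \<partial>M)"
    using integral_cong_AE[OF ce_meas fq_meas ae] ce_eq by simp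
qed

lemma q_eq_q_init_minus_mart:
  assumes "1 \<le> s"
  shows "a k s \<omega> \<le> T / 2 \<Longrightarrow> q k s \<omega> = q_init - mart k s \<omega>"
  using assms
proof (induction s rule: nat_induct_at_least)
  case base
  show ?case unfolding q_def q_init_def mart_def c_def a_def by (simp add: acount_1 ccount_1)
next
  case (Suc s)
  show ?case
  proof (cases "g s \<omega> = k")
    case False
    then have "a k (Suc s) \<omega> = a k s \<omega>" "c k (Suc s) \<omega> = c k s \<omega>" "mart k (Suc s) \<omega> = mart k s \<omega>"
      using Suc.hyps unfolding a_def c_def mart_def by (simp_all add: acount_Suc ccount_Suc)
    then show ?thesis using Suc unfolding q_def by simp
  next
    case True
    have a_Suc: "a k (Suc s) \<omega> = a k s \<omega> + 1"
      using Suc.hyps True unfolding a_def by (simp add: acount_Suc)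
    then have a_le: "a k s \<omega> \<le> T / 2" using Suc.prems by simp
    define N where "N = T - a k s \<omega> - Y"
    have N: "N - 1 \<ge> T / 4" using den_ge[OF a_le] unfolding den_def N_def by simp
    then have N_pos: "N > 0" "N - 1 > 0" using T_pos by auto
    have q_s: "q k s \<omega> = (real m - c k s \<omega>) / N" unfolding q_def N_def ..
    have incr_s: "incr s \<omega> = (of_bool (z s \<omega>) - q k s \<omega>) / (N - 1)"
      using True a_le unfolding incr_def w_def den_def N_def by simp
    have "q k (Suc s) \<omega> = (real m - c k s \<omega> - of_bool (z s \<omega>)) / (N - 1)"
      using Suc.hyps True a_Suc unfolding q_def c_def N_def by (simp add: ccount_Suc algebra_simps)
    also have "\<dots> = q k s \<omega> - incr s \<omega>"
      unfolding incr_s q_s using N_pos by (simp add: field_simps)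
    also have "\<dots> = q_init - mart k (Suc s) \<omega>"
      using Suc.IH[OF a_le] Suc.hyps True unfolding mart_def by simp
    finally show ?thesis .
  qed
qed

lemma energy_Suc:
  assumes "1 \<le> s" "g s \<omega> \<in> {1..n}"
  shows "energy (Suc s) \<omega> = energy s \<omega> + 2 * (mart (g s \<omega>) s \<omega> * incr s \<omega>) + (incr s \<omega>)\<^sup>2"
proof -
  have mart_Suc: "mart k (Suc s) \<omega> = mart k s \<omega> + of_bool (g s \<omega> = k) * incr s \<omega>" for k
    unfolding mart_def using assms(1) by (simp add: sum.atLeastLessThan_Suc)
  have "energy (Suc s) \<omega> = (\<Sum>k\<in>{1..n}. (mart k s \<omega>)\<^sup>2
      + (if k = g s \<omega> then 2 * (mart k s \<omega> * incr s \<omega>) + (incr s \<omega>)\<^sup>2 else 0))"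
    unfolding energy_def mart_Suc by (intro sum.cong) (auto simp: power2_eq_square algebra_simps)
  also have "\<dots> = energy s \<omega> + (2 * (mart (g s \<omega>) s \<omega> * incr s \<omega>) + (incr s \<omega>)\<^sup>2)"
    unfolding energy_def sum.distrib using assms(2) by (simp add: sum.delta')
  finally show ?thesis by simp
qed

lemma mart_mult_incr_integral_eq_0:
  assumes s: "1 \<le> s" "s < m*n"
  shows "integrable M (\<lambda>\<omega>. mart (g s \<omega>) s \<omega> * incr s \<omega>)"
    and "(\<integral>\<omega>. mart (g s \<omega>) s \<omega> * incr s \<omega> \<partial>M) = 0"
proof -
  have j: "s \<in> {1..m*n}" using s by simp
  define f where "f \<omega> = mart (g s \<omega>) s \<omega> * (w s \<omega> / den (g s \<omega>) s \<omega>)" for \<omega>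
  have f_hist: "determined_by_history s f"
    unfolding f_def using s same_history_mart same_history_g same_history_w same_history_den
    by (intro determined_by_historyI) simp
  have f_bound: "\<bar>f \<omega>\<bar> \<le> 20 * (4 / T)" for \<omega>
  proof -
    have "\<bar>f \<omega>\<bar> = \<bar>mart (g s \<omega>) s \<omega>\<bar> * (w s \<omega> / den (g s \<omega>) s \<omega>)"
      unfolding f_def abs_mult abs_of_nonneg[OF w_div_den_nonneg] ..
    also have "\<dots> \<le> 20 * (4 / T)"
      using mart_abs_le[of s] s w_div_den_nonneg w_div_den_le by (intro mult_mono) auto
    finally show ?thesis .
  qed
  have f_support: "w s \<omega> \<noteq> 0" if "f \<omega> \<noteq> 0" for \<omega>
    using that unfolding f_def by auto
  note z_eq_q = integral_mult_z_eq_mult_q[OF j f_hist f_bound f_support]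
  have "f \<in> borel_measurable M" using determined_by_history_measurable[OF _ f_hist] s by simp
  then have fz_int: "integrable M (\<lambda>\<omega>. f \<omega> * of_bool (z s \<omega>))"
    using j f_bound by (intro integrable_mult_z)
  have "mart (g s \<omega>) s \<omega> * incr s \<omega> = f \<omega> * of_bool (z s \<omega>) - f \<omega> * q (g s \<omega>) s \<omega>" for \<omega>
    unfolding f_def incr_def by (simp add: divide_inverse algebra_simps)
  then show "integrable M (\<lambda>\<omega>. mart (g s \<omega>) s \<omega> * incr s \<omega>)"
    and "(\<integral>\<omega>. mart (g s \<omega>) s \<omega> * incr s \<omega> \<partial>M) = 0"
    using fz_int z_eq_q by simp_all
qed

lemma integral_incr_sq_le:
  assumes s: "1 \<le> s" "s \<le> m*n"
  shows "integrable M (\<lambda>\<omega>. (incr s \<omega>)\<^sup>2)"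
    and "(\<integral>\<omega>. (incr s \<omega>)\<^sup>2 \<partial>M) \<le> 16 / T\<^sup>2 * (\<integral>\<omega>. of_bool (z s \<omega>) \<partial>M)"
proof -
  have j: "s \<in> {1..m*n}" using s by simp
  define r where "r \<omega> = (w s \<omega> / den (g s \<omega>) s \<omega>)\<^sup>2" for \<omega>
  define f where "f \<omega> = r \<omega> * q (g s \<omega>) s \<omega>" for \<omega>
  have r_hist: "determined_by_history s r" and f_hist: "determined_by_history s f"
    unfolding r_def f_def using s same_history_g same_history_w same_history_den same_history_q
    by (auto intro!: determined_by_historyI)
  have r_meas: "r \<in> borel_measurable M" and f_meas: "f \<in> borel_measurable M"
    using determined_by_history_measurable r_hist f_hist s by auto
  have r_bounds: "0 \<le> r \<omega>" "r \<omega> \<le> 16 / T\<^sup>2" for \<omega>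
    unfolding r_def using w_div_den_sq_le by simp_all
  have f_support: "w s \<omega> \<noteq> 0" if "f \<omega> \<noteq> 0" for \<omega>
    using that unfolding f_def r_def by auto
  have f_bound: "\<bar>f \<omega>\<bar> \<le> 16 / T\<^sup>2 * 4" for \<omega>
  proof (cases "w s \<omega> = 0")
    case False
    then have "\<bar>q (g s \<omega>) s \<omega>\<bar> \<le> 4" using q_abs_le w_eq_1 s by blast
    then show ?thesis unfolding f_def abs_mult using r_bounds[of \<omega>] by (intro mult_mono) auto
  qed (simp add: f_def r_def)
  note z_eq_q = integral_mult_z_eq_mult_q[OF j f_hist f_bound f_support]
  have rz_int: "integrable M (\<lambda>\<omega>. r \<omega> * of_bool (z s \<omega>))"
    using j r_meas r_bounds by (intro integrable_mult_z[where B="16 / T\<^sup>2"]) auto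
  have fz_int: "integrable M (\<lambda>\<omega>. f \<omega> * of_bool (z s \<omega>))"
    using j f_meas f_bound by (intro integrable_mult_z)
  have z_int: "integrable M (\<lambda>\<omega>. of_bool (z s \<omega>) :: real)"
    by (rule bounded_integrable[where B=1]) (use z_measurable_real[OF j] in auto)
  text \<open>Since \<open>z\<^sup>2 = z\<close>, the square of an increment expands into terms to which (c) applies.\<close>
  have incr_sq: "(incr s \<omega>)\<^sup>2 = r \<omega> * of_bool (z s \<omega>) - 2 * (f \<omega> * of_bool (z s \<omega>)) + f \<omega> * q (g s \<omega>) s \<omega>"
    for \<omega>
  proof -
    have "of_bool (z s \<omega>) * of_bool (z s \<omega>) = (of_bool (z s \<omega>) :: real)" by simp
    then show ?thesis
      unfolding r_def f_def incr_eq_w_div_den_mult by (simp only: power2_mult_diff_idem mult.assoc)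
  qed
  show "integrable M (\<lambda>\<omega>. (incr s \<omega>)\<^sup>2)"
    unfolding incr_sq using rz_int fz_int z_eq_q(1) by simp
  have "(\<integral>\<omega>. (incr s \<omega>)\<^sup>2 \<partial>M)
      = (\<integral>\<omega>. r \<omega> * of_bool (z s \<omega>) \<partial>M) - (\<integral>\<omega>. f \<omega> * q (g s \<omega>) s \<omega> \<partial>M)"
    unfolding incr_sq using rz_int fz_int z_eq_q by simp
  also have "\<dots> \<le> (\<integral>\<omega>. r \<omega> * of_bool (z s \<omega>) \<partial>M)"
  proof -
    have "f \<omega> * q (g s \<omega>) s \<omega> = r \<omega> * (q (g s \<omega>) s \<omega>)\<^sup>2" for \<omega>
      unfolding f_def by (simp add: power2_eq_square)
    then have "0 \<le> (\<integral>\<omega>. f \<omega> * q (g s \<omega>) s \<omega> \<partial>M)"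
      using r_bounds by (intro integral_nonneg_AE) auto
    then show ?thesis by simp
  qed
  also have "\<dots> \<le> (\<integral>\<omega>. 16 / T\<^sup>2 * of_bool (z s \<omega>) \<partial>M)"
    using rz_int z_int r_bounds by (intro integral_mono) (auto simp: mult_right_mono)
  finally show "(\<integral>\<omega>. (incr s \<omega>)\<^sup>2 \<partial>M) \<le> 16 / T\<^sup>2 * (\<integral>\<omega>. of_bool (z s \<omega>) \<partial>M)" by simp
qed

lemma integrable_energy: "s \<le> m*n \<Longrightarrow> integrable M (energy s)"
  using energy_measurable energy_bounded by (intro bounded_integrable[where B="400 * real n"]) auto

lemma integral_energy_Suc:
  assumes s: "1 \<le> s" "s < m*n"
  shows "(\<integral>\<omega>. energy (Suc s) \<omega> \<partial>M) = (\<integral>\<omega>. energy s \<omega> \<partial>M) + (\<integral>\<omega>. (incr s \<omega>)\<^sup>2 \<partial>M)"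
proof -
  have "(\<integral>\<omega>. energy (Suc s) \<omega> \<partial>M)
      = (\<integral>\<omega>. energy s \<omega> + 2 * (mart (g s \<omega>) s \<omega> * incr s \<omega>) + (incr s \<omega>)\<^sup>2 \<partial>M)"
    using s g_range energy_Suc by (intro Bochner_Integration.integral_cong) auto
  also have "\<dots> = (\<integral>\<omega>. energy s \<omega> \<partial>M) + (\<integral>\<omega>. (incr s \<omega>)\<^sup>2 \<partial>M)"
    using s integrable_energy integral_incr_sq_le(1) mart_mult_incr_integral_eq_0 by simp
  finally show ?thesis .
qed

lemma integral_energy_le:
  assumes "1 \<le> s"
  shows "s \<le> m*n \<Longrightarrow> (\<integral>\<omega>. energy s \<omega> \<partial>M) \<le> 16 / T\<^sup>2 * (\<Sum>i\<in>{1..<s}. \<integral>\<omega>. of_bool (z i \<omega>) \<partial>M)"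
  using assms
proof (induction s rule: nat_induct_at_least)
  case base
  then show ?case unfolding energy_def mart_def by simp
next
  case (Suc s)
  then have "(\<integral>\<omega>. energy (Suc s) \<omega> \<partial>M) \<le>
      16 / T\<^sup>2 * (\<Sum>i\<in>{1..<s}. \<integral>\<omega>. of_bool (z i \<omega>) \<partial>M) + 16 / T\<^sup>2 * (\<integral>\<omega>. of_bool (z s \<omega>) \<partial>M)"
    using integral_energy_Suc integral_incr_sq_le(2) by (simp add: add_mono)
  with Suc.hyps show ?case by (simp add: sum.atLeastLessThan_Suc distrib_left)
qed

lemma q_init_close: "\<bar>q_init - 1 / real n\<bar> \<le> sqrt (real m) / T"
proof -
  have n_pos: "real n > 0" using T_pos unfolding T_def by (simp add: zero_less_mult_iff)
  have TY: "5 * T / 6 \<le> T - Y" using Y_le_T by simp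
  have "q_init - 1 / real n = Y / (real n * (T - Y))"
    unfolding q_init_def using n_pos TY T_pos by (simp add: field_simps T_def)
  moreover have "0 \<le> Y / (real n * (T - Y))" using n_pos TY T_pos unfolding Y_def by simp
  moreover have "Y / (real n * (T - Y)) \<le> (sqrt (real m) * real n / 6) / (real n * (5 * T / 6))"
    using Y_le n_pos T_pos TY by (intro frac_le mult_left_mono) auto
  moreover have "\<dots> \<le> sqrt (real m) / T"
    using n_pos T_pos by (simp add: field_simps)
  ultimately have "0 \<le> q_init - 1 / real n" "q_init - 1 / real n \<le> sqrt (real m) / T" by linarith+
  then show ?thesis by simp
qed

lemma w_measurable: "t \<in> {1..m*n} \<Longrightarrow> w t \<in> borel_measurable M"
  using same_history_w
  by (intro determined_by_history_measurable[of t] determined_by_historyI) auto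

lemma integral_w_mult_z_eq:
  assumes t: "t \<in> {1..m*n}"
  shows "(\<integral>\<omega>. w t \<omega> * (of_bool (z t \<omega>) - 1 / real n) \<partial>M)
       = (q_init - 1 / real n) * (\<integral>\<omega>. w t \<omega> \<partial>M) - (\<integral>\<omega>. w t \<omega> * mart (g t \<omega>) t \<omega> \<partial>M)"
proof -
  have w_hist: "determined_by_history t (w t)"
    using same_history_w t by (intro determined_by_historyI) auto
  have w_bound: "\<bar>w t \<omega>\<bar> \<le> 1" for \<omega> using w_nonneg w_le_1 by simp
  note z_eq_q = integral_mult_z_eq_mult_q[OF t w_hist w_bound]
  have w_int: "integrable M (w t)"
    using w_measurable[OF t] w_bound by (intro bounded_integrable[where B=1])
  have wz_int: "integrable M (\<lambda>\<omega>. w t \<omega> * of_bool (z t \<omega>))"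
    using t w_measurable[OF t] w_bound by (intro integrable_mult_z)
  have wq: "w t \<omega> * q (g t \<omega>) t \<omega> = q_init * w t \<omega> - w t \<omega> * mart (g t \<omega>) t \<omega>" for \<omega>
  proof (cases "w t \<omega> = 0")
    case False
    then have "q (g t \<omega>) t \<omega> = q_init - mart (g t \<omega>) t \<omega>"
      using q_eq_q_init_minus_mart w_eq_1 t by simp
    then show ?thesis by (simp add: right_diff_distrib mult.commute)
  qed simp
  have wW_int: "integrable M (\<lambda>\<omega>. w t \<omega> * mart (g t \<omega>) t \<omega>)"
  proof -
    have "integrable M (\<lambda>\<omega>. q_init * w t \<omega> - w t \<omega> * q (g t \<omega>) t \<omega>)"
      using w_int z_eq_q(1) by simp
    then show ?thesis unfolding wq by simp
  qed
  have "(\<integral>\<omega>. w t \<omega> * (of_bool (z t \<omega>) - 1 / real n) \<partial>M)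
      = (\<integral>\<omega>. w t \<omega> * of_bool (z t \<omega>) \<partial>M) - (\<integral>\<omega>. w t \<omega> \<partial>M) / real n"
    using wz_int w_int by (simp add: right_diff_distrib)
  also have "\<dots> = (\<integral>\<omega>. q_init * w t \<omega> - w t \<omega> * mart (g t \<omega>) t \<omega> \<partial>M) - (\<integral>\<omega>. w t \<omega> \<partial>M) / real n"
    using z_eq_q(2) unfolding wq by simp
  also have "\<dots> = (q_init - 1 / real n) * (\<integral>\<omega>. w t \<omega> \<partial>M) - (\<integral>\<omega>. w t \<omega> * mart (g t \<omega>) t \<omega> \<partial>M)"
    using w_int wW_int by (simp add: algebra_simps)
  finally show ?thesis .
qed

lemma mart_guess_measurable:
  assumes "t \<in> {1..m*n}"
  shows "(\<lambda>\<omega>. mart (g t \<omega>) t \<omega>) \<in> borel_measurable M"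
proof (rule determined_by_history_measurable[of t])
  show "determined_by_history t (\<lambda>\<omega>. mart (g t \<omega>) t \<omega>)"
    using same_history_mart same_history_g assms by (intro determined_by_historyI) auto
qed (use assms in simp)

lemma integral_mart_guess_sq_le:
  assumes t: "t \<in> {1..m*n}"
  shows "integrable M (\<lambda>\<omega>. (mart (g t \<omega>) t \<omega>)\<^sup>2)"
    and "(\<integral>\<omega>. (mart (g t \<omega>) t \<omega>)\<^sup>2 \<partial>M) \<le> 16 / T\<^sup>2 * (\<Sum>i=1..m*n. \<integral>\<omega>. of_bool (z i \<omega>) \<partial>M)"
proof -
  have "(mart (g t \<omega>) t \<omega>)\<^sup>2 \<le> 20\<^sup>2" for \<omega>
    using mart_abs_le[of t] t by (intro power2_le_iff_abs_le[THEN iffD2]) auto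
  then show sq_int: "integrable M (\<lambda>\<omega>. (mart (g t \<omega>) t \<omega>)\<^sup>2)"
    using mart_guess_measurable[OF t] by (intro bounded_integrable[where B="20\<^sup>2"]) auto
  have "(\<integral>\<omega>. (mart (g t \<omega>) t \<omega>)\<^sup>2 \<partial>M) \<le> (\<integral>\<omega>. energy t \<omega> \<partial>M)"
  proof (rule integral_mono[OF sq_int])
    show "integrable M (energy t)" using t by (intro integrable_energy) auto
    fix \<omega> assume "\<omega> \<in> space M"
    then have "g t \<omega> \<in> {1..n}" using g_range t by simp
    then show "(mart (g t \<omega>) t \<omega>)\<^sup>2 \<le> energy t \<omega>"
      unfolding energy_def by (auto intro: member_le_sum)
  qed
  also have "\<dots> \<le> 16 / T\<^sup>2 * (\<Sum>i\<in>{1..<t}. \<integral>\<omega>. of_bool (z i \<omega>) \<partial>M)"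
    using integral_energy_le[of t] t by simp
  also have "\<dots> \<le> 16 / T\<^sup>2 * (\<Sum>i=1..m*n. \<integral>\<omega>. of_bool (z i \<omega>) \<partial>M)"
    using t by (intro mult_left_mono sum_mono2) auto
  finally show "(\<integral>\<omega>. (mart (g t \<omega>) t \<omega>)\<^sup>2 \<partial>M) \<le> 16 / T\<^sup>2 * (\<Sum>i=1..m*n. \<integral>\<omega>. of_bool (z i \<omega>) \<partial>M)" .
qed

lemma integral_w_mult_mart_le:
  assumes t: "t \<in> {1..m*n}"
  shows "\<bar>\<integral>\<omega>. w t \<omega> * mart (g t \<omega>) t \<omega> \<partial>M\<bar>
       \<le> 4 / T * sqrt (\<Sum>i=1..m*n. \<integral>\<omega>. of_bool (z i \<omega>) \<partial>M)"
proof -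
  define W where "W \<omega> = mart (g t \<omega>) t \<omega>" for \<omega>
  have W_meas: "W \<in> borel_measurable M" unfolding W_def by (rule mart_guess_measurable[OF t])
  have W_bound: "\<bar>W \<omega>\<bar> \<le> 20" for \<omega> unfolding W_def using t by (intro mart_abs_le) auto
  have absW_int: "integrable M (\<lambda>\<omega>. \<bar>W \<omega>\<bar>)"
    using W_meas W_bound by (intro bounded_integrable[where B=20]) auto
  have wW_bound: "\<bar>w t \<omega> * W \<omega>\<bar> \<le> \<bar>W \<omega>\<bar>" for \<omega>
    using w_nonneg w_le_1 by (simp add: abs_mult mult_left_le_one_le)
  have wW_int: "integrable M (\<lambda>\<omega>. \<bar>w t \<omega> * W \<omega>\<bar>)"
  proof (rule bounded_integrable[where B=20])
    show "(\<lambda>\<omega>. \<bar>w t \<omega> * W \<omega>\<bar>) \<in> borel_measurable M" using w_measurable[OF t] W_meas by measurable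
  qed (use wW_bound W_bound order_trans in fastforce)
  have "\<bar>\<integral>\<omega>. w t \<omega> * W \<omega> \<partial>M\<bar> \<le> (\<integral>\<omega>. \<bar>w t \<omega> * W \<omega>\<bar> \<partial>M)"
    by (rule integral_abs_bound)
  also have "\<dots> \<le> (\<integral>\<omega>. \<bar>W \<omega>\<bar> \<partial>M)"
    using wW_int absW_int wW_bound by (intro integral_mono)
  also have "\<dots> \<le> sqrt (\<integral>\<omega>. \<bar>W \<omega>\<bar>\<^sup>2 \<partial>M)"
    using integral_mart_guess_sq_le(1)[OF t]
    by (intro integral_le_sqrt_integral_square[OF absW_int]) (simp add: W_def)
  also have "\<dots> \<le> sqrt (16 / T\<^sup>2 * (\<Sum>i=1..m*n. \<integral>\<omega>. of_bool (z i \<omega>) \<partial>M))"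
    using integral_mart_guess_sq_le(2)[OF t] by (simp add: W_def)
  also have "\<dots> = 4 / T * sqrt (\<Sum>i=1..m*n. \<integral>\<omega>. of_bool (z i \<omega>) \<partial>M)"
    using T_pos by (simp add: real_sqrt_mult real_sqrt_divide)
  finally show ?thesis unfolding W_def .
qed

theorem integral_w_mult_z_minus_inv_n_le:
  assumes t: "t \<in> {1..m*n}"
  shows "\<bar>\<integral>\<omega>. w t \<omega> * (of_bool (z t \<omega>) - 1 / real n) \<partial>M\<bar>
       \<le> 4 / T * sqrt (6 * (\<Sum>i=1..m*n. \<integral>\<omega>. of_bool (z i \<omega>) \<partial>M) + 8 * real m)"
proof -
  define Z :: real where "Z = (\<Sum>i=1..m*n. \<integral>\<omega>. of_bool (z i \<omega>) \<partial>M)"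
  have Z_nonneg: "0 \<le> Z" unfolding Z_def by (intro sum_nonneg integral_nonneg_AE) auto
  have "\<bar>(q_init - 1 / real n) * (\<integral>\<omega>. w t \<omega> \<partial>M)\<bar> \<le> sqrt (real m) / T * 1"
  proof -
    have "integrable M (w t)"
      using w_measurable[OF t] w_nonneg w_le_1 by (intro bounded_integrable[where B=1]) auto
    then have "(\<integral>\<omega>. w t \<omega> \<partial>M) \<le> (\<integral>\<omega>. 1 \<partial>M)"
      using w_le_1 by (intro integral_mono) auto
    moreover have "0 \<le> (\<integral>\<omega>. w t \<omega> \<partial>M)" using w_nonneg by (intro integral_nonneg_AE) auto
    ultimately have "\<bar>\<integral>\<omega>. w t \<omega> \<partial>M\<bar> \<le> 1" using prob_space by simp
    then show ?thesis unfolding abs_mult using q_init_close by (intro mult_mono) auto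
  qed
  then have "\<bar>\<integral>\<omega>. w t \<omega> * (of_bool (z t \<omega>) - 1 / real n) \<partial>M\<bar> \<le> sqrt (real m) / T + 4 / T * sqrt Z"
    using integral_w_mult_z_eq[OF t] integral_w_mult_mart_le[OF t] unfolding Z_def by linarith
  also have "\<dots> = (sqrt (real m) + 4 * sqrt Z) / T" by (simp add: add_divide_distrib)
  also have "\<dots> \<le> 4 * sqrt (6 * Z + 8 * real m) / T"
    using sqrt_add_four_sqrt_le[OF _ Z_nonneg] T_pos by (intro divide_right_mono) auto
  finally show ?thesis unfolding Z_def by simp
qed

end

theorem lemma2p4:
  fixes M :: "'a measure" and R :: "'r measure"
    and m n :: nat
    and deck :: "'a \<Rightarrow> nat list"
    and \<rho> :: "'a \<Rightarrow> 'r"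
    and G :: "nat \<Rightarrow> 'r \<Rightarrow> bool list \<Rightarrow> nat"
    and g :: "nat \<Rightarrow> 'a \<Rightarrow> nat"
    and y z :: "nat \<Rightarrow> 'a \<Rightarrow> bool"
    and t :: nat
  assumes P: "prob_space M"
    and m_pos: "m \<ge> 1" and n_pos: "n \<ge> 1"
    and n_big: "real n \<ge> 1200 * sqrt (real m)"
    \<comment> \<open>uniformly shuffled deck\<close>
    and deck_meas: "deck \<in> measurable M (count_space UNIV)"
    and deck_unif: "\<forall>xs\<in>decks m n. measure M {\<omega> \<in> space M. deck \<omega> = xs} = 1 / real (card (decks m n))"
    \<comment> \<open>guessing strategy, randomized by \<rho> independently of the deck\<close>
    and rho_meas: "\<rho> \<in> measurable M R"
    and rho_indep: "distr M (R \<Otimes>\<^sub>M count_space UNIV) (\<lambda>\<omega>. (\<rho> \<omega>, deck \<omega>))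
                    = distr M R \<rho> \<Otimes>\<^sub>M distr M (count_space UNIV) deck"
    and G_meas: "\<forall>i bs. (\<lambda>r. G i r bs) \<in> measurable R (count_space UNIV)"
    and G_range: "\<forall>i\<in>{1..m*n}. \<forall>r\<in>space R. \<forall>bs. G i r bs \<in> {1..n}"
    and play: "\<forall>\<omega>\<in>space M. \<forall>i\<in>{1..m*n}.
                 g i \<omega> = G i (\<rho> \<omega>) (map (\<lambda>j. y j \<omega>) [1..<i])
               \<and> y i \<omega> = (deck \<omega> ! (i - 1) = g i \<omega>)"
    \<comment> \<open>the auxiliary random vector z\<close>
    and z_meas: "\<forall>i\<in>{1..m*n}. z i \<in> measurable M (count_space UNIV)"
    and cond_a: "AE \<omega> in M. \<forall>k\<in>{1..n}. \<forall>s\<in>{1..m*n+1}.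
        int m - max (int (m*n) - int (acount (\<lambda>i. g i \<omega>) k s) - int (Ybd m n)) 0
          \<le> int (ccount (\<lambda>i. g i \<omega>) (\<lambda>i. z i \<omega>) k s)
        \<and> ccount (\<lambda>i. g i \<omega>) (\<lambda>i. z i \<omega>) k s \<le> m"
    and cond_b: "\<forall>s\<in>{1..m*n}. \<forall>gs ys. measure M (gy_cell M g y s gs ys) > 0 \<longrightarrow>
        prob_space.indep_vars (uniform_measure M (gy_cell M g y s gs ys))
            (\<lambda>_. count_space UNIV) z {1..s}
      \<and> distr (uniform_measure M (gy_cell M g y s gs ys)) (count_space UNIV \<Otimes>\<^sub>M count_space UNIV)
            (\<lambda>\<omega>. (map (\<lambda>i. z i \<omega>) [1..<s+1],
                   (map (\<lambda>i. g i \<omega>) [1..<m*n+1], map (\<lambda>i. y i \<omega>) [1..<m*n+1])))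
          = distr (uniform_measure M (gy_cell M g y s gs ys)) (count_space UNIV)
              (\<lambda>\<omega>. map (\<lambda>i. z i \<omega>) [1..<s+1])
            \<Otimes>\<^sub>M distr (uniform_measure M (gy_cell M g y s gs ys)) (count_space UNIV)
              (\<lambda>\<omega>. (map (\<lambda>i. g i \<omega>) [1..<m*n+1], map (\<lambda>i. y i \<omega>) [1..<m*n+1]))"
    and cond_c: "\<forall>s\<in>{1..m*n}. AE \<omega> in M.
        int (acount (\<lambda>i. g i \<omega>) (g s \<omega>) s) < int (m*n) - int (Ybd m n) \<longrightarrow>
        real_cond_exp M (hist_algebra M g z s) (\<lambda>\<omega>. of_bool (z s \<omega>)) \<omega>
          = (real m - real (ccount (\<lambda>i. g i \<omega>) (\<lambda>i. z i \<omega>) (g s \<omega>) s))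
            / (real (m*n) - real (acount (\<lambda>i. g i \<omega>) (g s \<omega>) s) - real (Ybd m n))"
    and cond_d: "\<forall>s\<in>{1..m*n}. AE \<omega> in M.
        real_cond_exp M (hist_algebra M g y s) (\<lambda>\<omega>. of_bool (y s \<omega>)) \<omega>
          \<le> real_cond_exp M (hist_algebra M g z s) (\<lambda>\<omega>. of_bool (z s \<omega>)) \<omega>
        \<longrightarrow> (y s \<omega> \<longrightarrow> z s \<omega>)"
    and t_range: "t \<in> {1..m*n}"
  shows "\<bar>\<integral>\<omega>. of_bool (real (acount (\<lambda>i. g i \<omega>) (g t \<omega>) t) \<le> real (m*n) / 2)
                 * (of_bool (z t \<omega>) - 1 / real n) \<partial>M\<bar>
         \<le> 4 / real (m*n) * sqrt (6 * (\<Sum>i=1..m*n. \<integral>\<omega>. of_bool (z i \<omega>) \<partial>M) + 8 * real m)"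
proof -
  interpret prob_space M by (rule P)
  have g_meas: "g i \<in> measurable M (count_space UNIV)" if "i \<in> {1..m*n}" for i
    using guesses_measurable[OF rho_meas deck_meas G_meas[rule_format] play[rule_format] that] by simp
  have g_range: "g i \<omega> \<in> {1..n}" if "i \<in> {1..m*n}" "\<omega> \<in> space M" for i \<omega>
    using play G_range measurable_space[OF rho_meas that(2)] that by metis
  interpret coupled_guesses M m n g z
    using m_pos n_big g_meas z_meas g_range cond_c by unfold_locales auto
  show ?thesis
    using integral_w_mult_z_minus_inv_n_le[OF t_range] unfolding w_def a_def T_def .
qed

end
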